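(* Let $B$ be an $n\times n$ matrix of non-negative integers whose last $n-m$ rows are zero, where $m\neq n$. Suppose $A=J_{nm}+B=(a_{kl})$ is irreducible and its top-left $m\times m$ corner is irreducible. Let $x_1,\dots,x_n$ be non-negative integers, not all zero, and let $m<j\le n$. Let $A'$ be the $(n+1)\times(n+1)$ matrix defined as follows: - its first row is $(x_j,x_1,x_2,\dots,x_n)$; - for $i=1,\dots,m$, its $(i+1)$-st row is $(a_{ij},a_{i1},a_{i2},\dots,a_{in})$; - its last $n-m$ rows consist entirely of $\infty$. Then $A\sim_M A'$.
   Context: $J_{nm}$ ($0\le m\le n$) is the $n\times n$ matrix whose $i$-th row, for $i\le m$, has a $1$ in position $i$ and $0$ elsewhere, and whose last $n-m$ rows consist entirely of $\infty$. Arithmetic convention: $\infty+a=\infty$. For an $X\times X$ matrix $A$ with entries in $\{0,1,2,\dots\}\cup\{\infty\}$, $G_A$ is the graph with vertex set $X$ and exactly $A(x,y)$ edges from $x$ to $y$. A matrix $A$ is irreducible if $G_A$ is strongly connected. For matrices, $A\sim_M B$ means $G_A\sim_M G_B$. A graph may have multiple edges and loops. A source receives no edges, a sink emits no edges, and an infinite emitter emits infinitely many edges. A vertex is singular if it is a sink or infinite emitter, and regular otherwise. Move-equivalence $\sim_M$ is the smallest equivalence relation on graphs with finitely many vertices such that $G\sim_M E$ whenever $E$ is isomorphic to a graph obtained from $G$ by one of the following moves. (S) Delete a regular source together with the edges it emits. (R) For a regular vertex $u$ emitting exactly one edge $f$, with $r(f)\neq u$, and all of whose incoming edges have the same source $v$: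 delete $u$, $f$ and the edges into $u$, and add for each $e\in r^{-1}(u)$ an edge $[ef]$ from $v$ to $r(f)$. (O) Out-splitting at a non-sink $v$ along a partition $\mathcal E_1,\dots,\mathcal E_n$ of $s^{-1}(v)$ with at most one infinite part. Replace $v$ by $v^1,\dots,v^n$. Each edge $e$ into $v$ becomes copies $e^1,\dots,e^n$ with $r(e^i)=v^i$ and source $s(e)$, or source $v^j$ if $s(e)=v$ and $e\in\mathcal E_j$. An edge from $v$ to $w\neq v$ lying in $\mathcal E_i$ gets source $v^i$. (I) In-splitting at a regular non-source $v$ along a partition $\mathcal E_1,\dots,\mathcal E_n$ of $r^{-1}(v)$. Replace $v$ by $v^1,\dots,v^n$. Each edge $e$ out of $v$ becomes copies $e^1,\dots,e^n$ with $s(e^i)=v^i$ and range $r(e)$, or range $v^j$ if $r(e)=v$ and $e\in\mathcal E_j$. An edge into $v$ from $w\neq v$ lying in $\mathcal E_i$ gets range $v^i$. *)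

theory Defs
  imports Main "HOL-Library.Extended_Nat" "HOL-Library.Nat_Bijection"
begin

record ('v,'e) dgraph =
  gV :: "'v set"
  gE :: "'e set"
  gs :: "'e \<Rightarrow> 'v"
  gr :: "'e \<Rightarrow> 'v"

definition wf_graph :: "('v,'e) dgraph \<Rightarrow> bool" where
  "wf_graph G \<longleftrightarrow> finite (gV G) \<and>
     (\<forall>e\<in>gE G. gs G e \<in> gV G \<and> gr G e \<in> gV G)"

definition graph_iso :: "('v,'e) dgraph \<Rightarrow> ('w,'f) dgraph \<Rightarrow> bool" where
  "graph_iso G H \<longleftrightarrow> (\<exists>\<phi> \<psi>. bij_betw \<phi> (gV G) (gV H) \<and> bij_betw \<psi> (gE G) (gE H) \<and>
     (\<forall>e\<in>gE G. gs H (\<psi> e) = \<phi> (gs G e) \<and> gr H (\<psi> e) = \<phi> (gr G e)))"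

definition out_edges :: "('v,'e) dgraph \<Rightarrow> 'v \<Rightarrow> 'e set" where
  "out_edges G v = {e\<in>gE G. gs G e = v}"

definition in_edges :: "('v,'e) dgraph \<Rightarrow> 'v \<Rightarrow> 'e set" where
  "in_edges G v = {e\<in>gE G. gr G e = v}"

definition is_source :: "('v,'e) dgraph \<Rightarrow> 'v \<Rightarrow> bool" where
  "is_source G v \<longleftrightarrow> in_edges G v = {}"

definition is_sink :: "('v,'e) dgraph \<Rightarrow> 'v \<Rightarrow> bool" where
  "is_sink G v \<longleftrightarrow> out_edges G v = {}"

definition inf_emitter :: "('v,'e) dgraph \<Rightarrow> 'v \<Rightarrow> bool" where
  "inf_emitter G v \<longleftrightarrow> infinite (out_edges G v)"

definition is_regular :: "('v,'e) dgraph \<Rightarrow> 'v \<Rightarrow> bool" where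
  "is_regular G v \<longleftrightarrow> \<not> is_sink G v \<and> \<not> inf_emitter G v"

definition S_ok :: "('v,'e) dgraph \<Rightarrow> 'v \<Rightarrow> bool" where
  "S_ok G v \<longleftrightarrow> v \<in> gV G \<and> is_regular G v \<and> is_source G v"

definition S_move :: "('v,'e) dgraph \<Rightarrow> 'v \<Rightarrow> ('v,'e) dgraph" where
  "S_move G v = \<lparr> gV = gV G - {v}, gE = {e\<in>gE G. gs G e \<noteq> v}, gs = gs G, gr = gr G \<rparr>"

text \<open>(R) reduction at a vertex u emitting exactly one edge f; the new edge [ef] is Inr e\<close>
definition R_ok :: "('v,'e) dgraph \<Rightarrow> 'v \<Rightarrow> 'e \<Rightarrow> bool" where
  "R_ok G u f \<longleftrightarrow> u \<in> gV G \<and> f \<in> gE G \<and> out_edges G u = {f} \<and> gr G f \<noteq> u \<and>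
     (\<exists>v. \<forall>e\<in>in_edges G u. gs G e = v)"

definition R_move :: "('v,'e) dgraph \<Rightarrow> 'v \<Rightarrow> 'e \<Rightarrow> ('v,'e + 'e) dgraph" where
  "R_move G u f = \<lparr> gV = gV G - {u},
     gE = Inl ` {e\<in>gE G. e \<noteq> f \<and> gr G e \<noteq> u} \<union> Inr ` in_edges G u,
     gs = case_sum (gs G) (gs G),
     gr = case_sum (gr G) (\<lambda>_. gr G f) \<rparr>"

text \<open>A partition of a set X into k nonempty parts, given by an index function p
  (part i, for i < k, is {e \<in> X. p e = i}).\<close>
definition is_partition :: "'e set \<Rightarrow> nat \<Rightarrow> ('e \<Rightarrow> nat) \<Rightarrow> bool" where
  "is_partition X k p \<longleftrightarrow> (\<forall>e\<in>X. p e < k) \<and> (\<forall>i<k. \<exists>e\<in>X. p e = i)"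

text \<open>(O) out-splitting at v; new vertices (v,i), i<k; other vertices w become (w,0);
  edge copies e^i are (e,i); edges not into v become (e,0).\<close>
definition O_ok :: "('v,'e) dgraph \<Rightarrow> 'v \<Rightarrow> nat \<Rightarrow> ('e \<Rightarrow> nat) \<Rightarrow> bool" where
  "O_ok G v k p \<longleftrightarrow> v \<in> gV G \<and> \<not> is_sink G v \<and> is_partition (out_edges G v) k p \<and>
     (\<forall>i<k. \<forall>i'<k. infinite {e\<in>out_edges G v. p e = i} \<and>
                   infinite {e\<in>out_edges G v. p e = i'} \<longrightarrow> i = i')"

definition O_move :: "('v,'e) dgraph \<Rightarrow> 'v \<Rightarrow> nat \<Rightarrow> ('e \<Rightarrow> nat) \<Rightarrow> ('v \<times> nat, 'e \<times> nat) dgraph" where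
  "O_move G v k p = \<lparr>
     gV = {(w,0) | w. w \<in> gV G \<and> w \<noteq> v} \<union> {(v,i) | i. i < k},
     gE = {(e,i) | e i. e \<in> gE G \<and> gr G e = v \<and> i < k} \<union> {(e,0) | e. e \<in> gE G \<and> gr G e \<noteq> v},
     gs = (\<lambda>(e,i). if gs G e = v then (v, p e) else (gs G e, 0)),
     gr = (\<lambda>(e,i). if gr G e = v then (v, i) else (gr G e, 0)) \<rparr>"

definition I_ok :: "('v,'e) dgraph \<Rightarrow> 'v \<Rightarrow> nat \<Rightarrow> ('e \<Rightarrow> nat) \<Rightarrow> bool" where
  "I_ok G v k p \<longleftrightarrow> v \<in> gV G \<and> is_regular G v \<and> \<not> is_source G v \<and>
     is_partition (in_edges G v) k p"

definition I_move :: "('v,'e) dgraph \<Rightarrow> 'v \<Rightarrow> nat \<Rightarrow> ('e \<Rightarrow> nat) \<Rightarrow> ('v \<times> nat, 'e \<times> nat) dgraph" where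
  "I_move G v k p = \<lparr>
     gV = {(w,0) | w. w \<in> gV G \<and> w \<noteq> v} \<union> {(v,i) | i. i < k},
     gE = {(e,i) | e i. e \<in> gE G \<and> gs G e = v \<and> i < k} \<union> {(e,0) | e. e \<in> gE G \<and> gs G e \<noteq> v},
     gs = (\<lambda>(e,i). if gs G e = v then (v, i) else (gs G e, 0)),
     gr = (\<lambda>(e,i). if gr G e = v then (v, p e) else (gr G e, 0)) \<rparr>"

text \<open>Graphs considered: vertices and edges are natural numbers (so edge sets are countable).\<close>
type_synonym ngraph = "(nat, nat) dgraph"

definition move_step :: "ngraph \<Rightarrow> ngraph \<Rightarrow> bool" where
  "move_step G H \<longleftrightarrow> wf_graph G \<and>
     ((\<exists>v. S_ok G v \<and> graph_iso (S_move G v) H) \<or>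
      (\<exists>u f. R_ok G u f \<and> graph_iso (R_move G u f) H) \<or>
      (\<exists>v k p. O_ok G v k p \<and> graph_iso (O_move G v k p) H) \<or>
      (\<exists>v k p. I_ok G v k p \<and> graph_iso (I_move G v k p) H))"

definition move_eq :: "ngraph \<Rightarrow> ngraph \<Rightarrow> bool" where
  "move_eq = (sup move_step move_step\<inverse>\<inverse>)\<^sup>*\<^sup>*"

text \<open>An n x n matrix is a function nat \<Rightarrow> nat \<Rightarrow> enat, indices 0..n-1.
  The graph G_A: vertices {0..<n}, edges encoded as triples (x,y,k) with k < A x y.\<close>
definition mat_graph :: "nat \<Rightarrow> (nat \<Rightarrow> nat \<Rightarrow> enat) \<Rightarrow> ngraph" where
  "mat_graph n A = \<lparr> gV = {..<n},
     gE = {prod_encode (x, prod_encode (y, k)) | x y k. x < n \<and> y < n \<and> enat k < A x y},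
     gs = (\<lambda>e. fst (prod_decode e)),
     gr = (\<lambda>e. fst (prod_decode (snd (prod_decode e)))) \<rparr>"

definition strongly_connected :: "('v,'e) dgraph \<Rightarrow> bool" where
  "strongly_connected G \<longleftrightarrow>
     (\<forall>x\<in>gV G. \<forall>y\<in>gV G. (x,y) \<in> {(gs G e, gr G e) | e. e \<in> gE G}\<^sup>*)"

definition irreducible_mat :: "nat \<Rightarrow> (nat \<Rightarrow> nat \<Rightarrow> enat) \<Rightarrow> bool" where
  "irreducible_mat n A \<longleftrightarrow> strongly_connected (mat_graph n A)"

definition mat_move_eq :: "nat \<Rightarrow> (nat \<Rightarrow> nat \<Rightarrow> enat) \<Rightarrow> nat \<Rightarrow> (nat \<Rightarrow> nat \<Rightarrow> enat) \<Rightarrow> bool" where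
  "mat_move_eq n A n' A' \<longleftrightarrow> move_eq (mat_graph n A) (mat_graph n' A')"

text \<open>J_{nm} (0-based): row i < m has 1 at position i, rows i \<ge> m are all \<infinity>.\<close>
definition J_mat :: "nat \<Rightarrow> nat \<Rightarrow> nat \<Rightarrow> nat \<Rightarrow> enat" where
  "J_mat n m i l = (if i < m then (if l = i then 1 else 0) else \<infinity>)"

end

theory Submission
  imports Defs
begin

text \<open>Since \<open>j > m\<close>, row \<open>j\<close> of \<open>A\<close> is infinite, so \<open>j\<close> is an infinite emitter of \<open>G\<^sub>A\<close>. Out-split \<open>j\<close>
  into a finite part consisting of \<open>x\<^sub>l\<close> of the edges to each \<open>l\<close>, and the infinite rest.
  The finite part becomes the new first vertex, with row \<open>(x\<^sub>j, x\<^sub>1, \<dots>, x\<^sub>n)\<close> once the copy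
  of \<open>j\<close> it receives is listed first; the infinite part keeps an all-\<open>\<infinity>\<close> row; every other
  row gains a column for the new vertex duplicating column \<open>j\<close>. This single move already
  turns \<open>G\<^sub>A\<close> into \<open>G\<^sub>A\<^sub>'\<close>.\<close>

definition mat_edge :: "nat \<Rightarrow> nat \<Rightarrow> nat \<Rightarrow> nat" where
  "mat_edge s r k = prod_encode (s, prod_encode (r, k))"

definition edge_src :: "nat \<Rightarrow> nat" where
  "edge_src e = fst (prod_decode e)"

definition edge_tgt :: "nat \<Rightarrow> nat" where
  "edge_tgt e = fst (prod_decode (snd (prod_decode e)))"

definition edge_idx :: "nat \<Rightarrow> nat" where
  "edge_idx e = snd (prod_decode (snd (prod_decode e)))"

lemma edge_decode_mat_edge [simp]:
  "edge_src (mat_edge s r k) = s" "edge_tgt (mat_edge s r k) = r" "edge_idx (mat_edge s r k) = k"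
  by (simp_all add: mat_edge_def edge_src_def edge_tgt_def edge_idx_def)

lemma mat_edge_eq_iff [simp]: "mat_edge s r k = mat_edge s' r' k' \<longleftrightarrow> s = s' \<and> r = r' \<and> k = k'"
  by (metis edge_decode_mat_edge)

lemma mat_graph_simps [simp]:
  "gV (mat_graph n A) = {..<n}"
  "gs (mat_graph n A) e = edge_src e"
  "gr (mat_graph n A) e = edge_tgt e"
  by (simp_all add: mat_graph_def edge_src_def edge_tgt_def)

lemma mem_mat_graph_edges:
  "e \<in> gE (mat_graph n A) \<longleftrightarrow> (\<exists>s r k. e = mat_edge s r k \<and> s < n \<and> r < n \<and> enat k < A s r)"
  by (auto simp: mat_graph_def mat_edge_def)

lemma wf_mat_graph: "wf_graph (mat_graph n A)"
  by (auto simp: wf_graph_def mem_mat_graph_edges)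

lemma mat_graph_cong:
  assumes "\<And>k l. k < n \<Longrightarrow> l < n \<Longrightarrow> A k l = B k l"
  shows "mat_graph n A = mat_graph n B"
  using assms by (auto simp: mat_graph_def)

lemma mat_move_eq_if_move_step:
  "move_step (mat_graph n A) (mat_graph n' A') \<Longrightarrow> mat_move_eq n A n' A'"
  by (auto simp: mat_move_eq_def move_eq_def)

text \<open>Vertex \<open>0\<close> is the new vertex, vertex \<open>l + 1\<close> is the old vertex \<open>l\<close>; both \<open>0\<close> and \<open>j + 1\<close>
  are copies of \<open>j\<close>.\<close>
definition split_origin :: "nat \<Rightarrow> nat \<Rightarrow> nat" where
  "split_origin j l = (if l = 0 then j else l - 1)"

lemma split_origin_simps [simp]:
  "split_origin j 0 = j"
  "split_origin j (Suc l) = l"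
  by (simp_all add: split_origin_def)

definition out_split_row :: "(nat \<Rightarrow> nat \<Rightarrow> enat) \<Rightarrow> nat \<Rightarrow> (nat \<Rightarrow> nat) \<Rightarrow> nat \<Rightarrow> nat \<Rightarrow> enat" where
  "out_split_row A j x k l =
     (if k = 0 then enat (x (split_origin j l)) else A (k - 1) (split_origin j l))"

locale infinite_row =
  fixes n j :: nat and A :: "nat \<Rightarrow> nat \<Rightarrow> enat" and x :: "nat \<Rightarrow> nat"
  assumes j_less: "j < n"
    and row_infinite: "\<And>l. l < n \<Longrightarrow> A j l = \<infinity>"
    and x_nonzero: "\<exists>l<n. x l \<noteq> 0"
begin

definition part :: "nat \<Rightarrow> nat" where
  "part e = (if edge_idx e < x (edge_tgt e) then 0 else 1)"

abbreviation G :: ngraph where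
  "G \<equiv> mat_graph n A"

abbreviation split_graph :: "(nat \<times> nat, nat \<times> nat) dgraph" where
  "split_graph \<equiv> O_move G j 2 part"

abbreviation H :: ngraph where
  "H \<equiv> mat_graph (Suc n) (out_split_row A j x)"

definition relabel_vertex :: "nat \<times> nat \<Rightarrow> nat" where
  "relabel_vertex v = (if v = (j, 0) then 0 else Suc (fst v))"

definition unlabel_vertex :: "nat \<Rightarrow> nat \<times> nat" where
  "unlabel_vertex v = (if v = 0 then (j, 0) else if v = Suc j then (j, 1) else (v - 1, 0))"

text \<open>The edges of the infinite part out of \<open>j\<close> are renumbered from \<open>0\<close>.\<close>
definition relabel_edge :: "nat \<times> nat \<Rightarrow> nat" where
  "relabel_edge a =
     (let s = edge_src (fst a); r = edge_tgt (fst a); k = edge_idx (fst a);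
          r' = relabel_vertex (r, snd a)
      in if s = j \<and> x r \<le> k then mat_edge (Suc j) r' (k - x r)
         else mat_edge (relabel_vertex (s, 0)) r' k)"

definition unlabel_edge :: "nat \<Rightarrow> nat \<times> nat" where
  "unlabel_edge e =
     (let s = fst (unlabel_vertex (edge_src e)); r = unlabel_vertex (edge_tgt e);
          k = edge_idx e + (if edge_src e = Suc j then x (fst r) else 0)
      in (mat_edge s (fst r) k, snd r))"

lemma split_graph_vertices:
  "gV split_graph = {(w, 0) | w. w < n \<and> w \<noteq> j} \<union> {(j, i) | i. i < 2}"
  by (auto simp: O_move_def)

lemma mem_split_graph_edges:
  "a \<in> gE split_graph \<longleftrightarrow> (\<exists>s r k i. a = (mat_edge s r k, i) \<and> s < n \<and> r < n \<and>
     enat k < A s r \<and> (r = j \<and> i < 2 \<or> r \<noteq> j \<and> i = 0))"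
  by (auto simp: O_move_def mem_mat_graph_edges)

lemma relabel_vertex_Pair:
  "relabel_vertex (w, i) = (if w = j \<and> i = 0 then 0 else Suc w)"
  by (simp add: relabel_vertex_def)

lemma split_origin_relabel_vertex [simp]: "split_origin j (relabel_vertex v) = fst v"
  by (simp add: split_origin_def relabel_vertex_def)

lemma relabel_unlabel_vertex [simp]: "relabel_vertex (unlabel_vertex v) = v"
  by (auto simp: relabel_vertex_def unlabel_vertex_def)

lemma unlabel_relabel_vertex:
  "w = j \<and> i < 2 \<or> i = 0 \<Longrightarrow> unlabel_vertex (relabel_vertex (w, i)) = (w, i)"
  by (auto simp: unlabel_vertex_def relabel_vertex_Pair)

lemma fst_unlabel_vertex: "fst (unlabel_vertex v) = split_origin j v"
  by (simp add: unlabel_vertex_def split_origin_def)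

lemma snd_unlabel_vertex:
  "split_origin j v = j \<and> snd (unlabel_vertex v) < 2 \<or>
   split_origin j v \<noteq> j \<and> snd (unlabel_vertex v) = 0"
  by (auto simp: unlabel_vertex_def split_origin_def)

lemma relabel_edge_mat_edge [simp]:
  "relabel_edge (mat_edge s r k, i) =
     (if s = j \<and> x r \<le> k then mat_edge (Suc j) (relabel_vertex (r, i)) (k - x r)
      else mat_edge (relabel_vertex (s, 0)) (relabel_vertex (r, i)) k)"
  by (simp add: relabel_edge_def Let_def)

lemma unlabel_edge_mat_edge:
  "unlabel_edge (mat_edge s r k) =
     (mat_edge (split_origin j s) (split_origin j r)
        (k + (if s = Suc j then x (split_origin j r) else 0)), snd (unlabel_vertex r))"
  by (simp add: unlabel_edge_def fst_unlabel_vertex)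

lemma relabel_vertex_bij: "bij_betw relabel_vertex (gV split_graph) (gV H)"
proof (rule bij_betw_byWitness[where f' = unlabel_vertex])
  show "\<forall>v\<in>gV split_graph. unlabel_vertex (relabel_vertex v) = v"
    by (auto simp: split_graph_vertices unlabel_relabel_vertex)
  show "relabel_vertex ` gV split_graph \<subseteq> gV H"
    using j_less by (auto simp: split_graph_vertices relabel_vertex_Pair)
  show "unlabel_vertex ` gV H \<subseteq> gV split_graph"
    using j_less by (auto simp: split_graph_vertices unlabel_vertex_def)
qed simp

lemma unlabel_relabel_edge:
  assumes "a \<in> gE split_graph"
  shows "unlabel_edge (relabel_edge a) = a"
proof -
  obtain s r k i where a: "a = (mat_edge s r k, i)" and i: "r = j \<and> i < 2 \<or> i = 0"
    using assms by (auto simp: mem_split_graph_edges)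
  have "snd (unlabel_vertex (relabel_vertex (r, i))) = i"
    using unlabel_relabel_vertex[OF i] by simp
  then show ?thesis
    by (simp add: a unlabel_edge_mat_edge relabel_vertex_Pair)
qed

lemma relabel_edge_in_mat_graph:
  assumes "a \<in> gE split_graph"
  shows "relabel_edge a \<in> gE H"
proof -
  obtain s r k i where a: "a = (mat_edge s r k, i)" "s < n" "r < n" "enat k < A s r"
    and i: "r = j \<and> i < 2 \<or> r \<noteq> j \<and> i = 0"
    using assms by (auto simp: mem_split_graph_edges)
  have r': "relabel_vertex (r, i) < Suc n"
    using \<open>r < n\<close> by (simp add: relabel_vertex_def)
  consider "s = j" "x r \<le> k" | "s = j" "k < x r" | "s \<noteq> j"
    by linarith
  then show ?thesis
  proof cases
    case 1
    then show ?thesis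
      using a r' j_less row_infinite
      by (auto simp: mem_mat_graph_edges out_split_row_def)
  qed (use a r' j_less in \<open>auto simp: mem_mat_graph_edges out_split_row_def relabel_vertex_Pair\<close>)
qed

lemma unlabel_edge_in_split_graph:
  assumes "e \<in> gE H"
  shows "unlabel_edge e \<in> gE split_graph"
proof -
  obtain s r k where e: "e = mat_edge s r k" "s < Suc n" "r < Suc n"
    and k: "enat k < out_split_row A j x s r"
    using assms by (auto simp: mem_mat_graph_edges)
  define k' where "k' = k + (if s = Suc j then x (split_origin j r) else 0)"
  have "enat k' < A (split_origin j s) (split_origin j r)"
  proof (cases "s = 0 \<or> s = Suc j")
    case True
    then show ?thesis
      using e j_less row_infinite by (auto simp: split_origin_def)
  next
    case False
    then show ?thesis
      using k by (simp add: k'_def out_split_row_def split_origin_def)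
  qed
  moreover have "split_origin j s < n" "split_origin j r < n"
    using e j_less by (auto simp: split_origin_def)
  moreover note snd_unlabel_vertex[of r]
  ultimately show ?thesis
    unfolding mem_split_graph_edges by (simp add: e unlabel_edge_mat_edge k'_def)
qed

lemma relabel_unlabel_edge:
  assumes "e \<in> gE H"
  shows "relabel_edge (unlabel_edge e) = e"
proof -
  obtain s r k where e: "e = mat_edge s r k" and k: "enat k < out_split_row A j x s r"
    using assms by (auto simp: mem_mat_graph_edges)
  obtain r\<^sub>0 i where r: "unlabel_vertex r = (r\<^sub>0, i)"
    by fastforce
  have r\<^sub>0: "split_origin j r = r\<^sub>0"
    using fst_unlabel_vertex[of r] r by simp
  have target: "relabel_vertex (r\<^sub>0, i) = r"
    using relabel_unlabel_vertex[of r] r by simp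
  consider "s = 0" | "s = Suc j" | l where "s = Suc l" "l \<noteq> j"
    by (cases s) auto
  then show ?thesis
  proof cases
    case 1
    then have "k < x r\<^sub>0"
      using k r\<^sub>0 by (simp add: out_split_row_def)
    with 1 show ?thesis
      by (simp add: e unlabel_edge_mat_edge r r\<^sub>0 target relabel_vertex_Pair[of j 0])
  next
    case (3 l)
    then show ?thesis
      by (simp add: e unlabel_edge_mat_edge r r\<^sub>0 target relabel_vertex_Pair[of l 0])
  qed (simp add: e unlabel_edge_mat_edge r r\<^sub>0 target)
qed

lemma relabel_edge_preserves_ends:
  assumes "a \<in> gE split_graph"
  shows "edge_src (relabel_edge a) = relabel_vertex (gs split_graph a)"
    and "edge_tgt (relabel_edge a) = relabel_vertex (gr split_graph a)"
proof -
  obtain s r k i where a: "a = (mat_edge s r k, i)" and i: "r = j \<and> i < 2 \<or> r \<noteq> j \<and> i = 0"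
    using assms by (auto simp: mem_split_graph_edges)
  show "edge_src (relabel_edge a) = relabel_vertex (gs split_graph a)"
    by (simp add: a O_move_def part_def relabel_vertex_Pair)
  show "edge_tgt (relabel_edge a) = relabel_vertex (gr split_graph a)"
    using i by (auto simp: a O_move_def relabel_vertex_Pair)
qed

lemma split_graph_iso: "graph_iso split_graph H"
proof -
  have "bij_betw relabel_edge (gE split_graph) (gE H)"
    by (rule bij_betw_byWitness[where f' = unlabel_edge])
      (auto simp: unlabel_relabel_edge relabel_unlabel_edge relabel_edge_in_mat_graph
         unlabel_edge_in_split_graph)
  then show ?thesis
    unfolding graph_iso_def mat_graph_simps(2,3)
    using relabel_vertex_bij relabel_edge_preserves_ends by blast
qed

lemma out_edges_infinite_row:
  "e \<in> out_edges G j \<longleftrightarrow> (\<exists>r k. e = mat_edge j r k \<and> r < n)"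
  using j_less row_infinite by (auto simp: out_edges_def mem_mat_graph_edges)

lemma finite_part_finite: "finite {e \<in> out_edges G j. part e = 0}"
proof (rule finite_subset)
  show "{e \<in> out_edges G j. part e = 0} \<subseteq> (\<lambda>(r, k). mat_edge j r k) ` (SIGMA r:{..<n}. {..<x r})"
    by (auto simp: out_edges_infinite_row part_def split: if_splits)
qed auto

lemma out_splitting_ok: "O_ok G j 2 part"
proof -
  obtain l where l: "l < n" "x l \<noteq> 0"
    using x_nonzero by blast
  have finite_edge: "mat_edge j l 0 \<in> {e \<in> out_edges G j. part e = 0}"
    using l by (auto simp: out_edges_infinite_row part_def)
  have infinite_edge: "mat_edge j 0 (x 0) \<in> {e \<in> out_edges G j. part e = 1}"
    using l by (auto simp: out_edges_infinite_row part_def)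
  have "is_partition (out_edges G j) 2 part"
    unfolding is_partition_def
  proof (intro conjI ballI allI impI)
    show "part e < 2" for e
      by (simp add: part_def)
    show "\<exists>e\<in>out_edges G j. part e = i" if "i < 2" for i
      using that finite_edge infinite_edge by (auto simp: less_2_cases_iff)
  qed
  moreover have "\<not> is_sink G j"
    using infinite_edge by (auto simp: is_sink_def)
  moreover have "i = 1" if "i < 2" "infinite {e \<in> out_edges G j. part e = i}" for i
    using that finite_part_finite by (auto simp: less_2_cases_iff)
  ultimately show ?thesis
    using j_less by (auto simp: O_ok_def)
qed

lemma move_step_out_split_row: "move_step G H"
  using wf_mat_graph out_splitting_ok split_graph_iso by (auto simp: move_step_def)

end

theorem lemma8p1:
  fixes n m j :: nat and B :: "nat \<Rightarrow> nat \<Rightarrow> nat" and x :: "nat \<Rightarrow> nat"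
    and A A' :: "nat \<Rightarrow> nat \<Rightarrow> enat"
  assumes "m \<le> n" and "m \<noteq> n"
    and "\<forall>i l. m \<le> i \<and> i < n \<and> l < n \<longrightarrow> B i l = 0"
    and "A = (\<lambda>i l. J_mat n m i l + enat (B i l))"
    and "irreducible_mat n A"
    and "irreducible_mat m A"
    and "\<exists>l<n. x l \<noteq> 0"
    and "m \<le> j" and "j < n"
    and "A' = (\<lambda>k l. if k = 0 then (if l = 0 then enat (x j) else enat (x (l - 1)))
                     else if k - 1 < m then (if l = 0 then A (k - 1) j else A (k - 1) (l - 1))
                     else \<infinity>)"
  shows "mat_move_eq n A (n + 1) A'"
proof -
  have infinite_rows: "A i l = \<infinity>" if "m \<le> i" for i l
    using that assms(4) by (simp add: J_mat_def)
  interpret infinite_row n j A x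
    using assms(7-9) infinite_rows by unfold_locales auto
  have "mat_graph (Suc n) A' = mat_graph (Suc n) (out_split_row A j x)"
    by (rule mat_graph_cong) (auto simp: assms(10) out_split_row_def split_origin_def infinite_rows)
  then show ?thesis
    using move_step_out_split_row by (simp add: mat_move_eq_if_move_step)
qed

end
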